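(* Assume the weights are asymptotically vanishing and there is $n_0$ such that for every $n\ge n_0$ the subgame perfect Nash equilibrium $\mathbf g^*_n$ exists, is unique and has the form $u^i_t=\theta^n_tx^i_t+(\bar\theta^n_t-\theta^n_t)\bar x_t$ with $\theta^n_t,\bar\theta^n_t$ uniformly bounded in $n$ and converging to $\theta^\infty_t,\bar\theta^\infty_t$. Let $n\ge n_0$, let $(x^i_t,u^i_t)$ be the states and actions under $\mathbf g^*_n$ and $(\hat x^i_t,\hat u^i_t)$ those under the no-sharing profile $\hat{\mathbf g}_n$, driven by the same initial states and noises. Then for every player $i$ and every $t\in\mathbb N_T$: $x^i_t-\bar x_t=\hat x^i_t-\hat{\bar x}_t$ and $u^i_t-\bar u_t=\hat u^i_t-\hat{\bar u}_t$; in particular $e^i_t=\zeta^i_t$. Consequently, with $e_t=\hat{\bar x}_t-z^n_t$ and $\zeta_t=\bar x_t-z^n_t$, $\mathrm{vec}(e^i_{t+1},e_{t+1},\zeta_{t+1})=\tilde A^n_t\,\mathrm{vec}(e^i_t,e_t,\zeta_t)+\mathrm{vec}(\Delta w^i_t,\bar w_t,\bar w_t)$, where $\tilde A^n_t=\mathrm{diag}\big(A_t+B_t\theta^n_t,\;A_t+\bar A_t+(B_t+\bar B_t)\theta^n_t,\;A_t+\bar A_t+(B_t+\bar B_t)\bar\theta^n_t\big)$ and $\Delta w^i_t=w^i_t-\bar w_t$. Similarly, when in the $n$-player game $(x,u)$ are generated by $u^i_t=\theta^\infty_tx^i_t+(\bar\theta^\infty_t-\theta^\infty_t)\bar x_t$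 and $(\hat x,\hat u)$ by $\hat{\mathbf g}_\infty$, the same relation holds with $\tilde A^n_t$ replaced by $\tilde A^\infty_t$ (defined with $\theta^\infty_t,\bar\theta^\infty_t$) and $z^n_t$ replaced by $z^\infty_t$ in $e_t,\zeta_t$.
   Context: Fix $T\ge1$, $d_x,d_u\ge1$, $n\ge2$; $\mathbb N_k=\{1,\dots,k\}$. Player $i\in\mathbb N_n$ has state $x^i_t\in\mathbb R^{d_x}$, action $u^i_t\in\mathbb R^{d_u}$, noise $w^i_t\in\mathbb R^{d_x}$; $\mathbf x_t=(x^1_t,\dots,x^n_t)$. Real weights $\alpha^i_n$, $\sum_i\alpha^i_n=1$; asymptotically vanishing: there exist $n_0,\gamma_{\max}>0$ with $\alpha^i_n=\gamma^i/n$, $\gamma^i\in[-\gamma_{\max},\gamma_{\max}]$, for $n>n_0$. $\bar x_t=\sum_i\alpha^i_nx^i_t$, $\bar u_t=\sum_i\alpha^i_nu^i_t$, $\bar w_t=\sum_i\alpha^i_nw^i_t$, and analogously $\hat{\bar x}_t,\hat{\bar u}_t$. Dynamics $x^i_{t+1}=A_tx^i_t+B_tu^i_t+\bar A_t\bar x_t+\bar B_t\bar u_t+w^i_t$; zero-mean noises, $\mathbf x_1,\mathbf w_1,\dots,\mathbf w_T$ mutually independent with bounded covariances. Per-step cost $c^i_t=(x^i_t)^\top Q_tx^i_t+2(x^i_t)^\top S^x_t\bar x_t+\bar x_t^\top\bar Q_t\bar x_t+(u^i_t)^\top R_tu^i_t+2(u^i_t)^\top S^u_t\bar u_t+\bar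 u_t^\top\bar R_t\bar u_t+\sum_j\alpha^j_n((x^j_t)^\top G^x_tx^j_t+(u^j_t)^\top G^u_tu^j_t)$; subgame perfect Nash equilibrium: perfect-sharing profile from which no unilateral perfect-sharing deviation lowers any player's expected cost-to-go $\mathbb E[\sum_{t=t_0}^Tc^i_t]$ at any $t_0$. Predictions $z^n_1=z^\infty_1=\mathbb E[\bar x_1]$, $z^n_{t+1}=(A_t+\bar A_t+(B_t+\bar B_t)\bar\theta^n_t)z^n_t$, $z^\infty_{t+1}=(A_t+\bar A_t+(B_t+\bar B_t)\bar\theta^\infty_t)z^\infty_t$. Profiles: $\hat{\mathbf g}_n$: $\hat u^i_t=\theta^n_t\hat x^i_t+(\bar\theta^n_t-\theta^n_t)z^n_t$; $\hat{\mathbf g}_\infty$: $\hat u^i_t=\theta^\infty_t\hat x^i_t+(\bar\theta^\infty_t-\theta^\infty_t)z^\infty_t$; under both $\hat x^i_1=x^i_1$ and $\hat x^i_{t+1}=A_t\hat x^i_t+B_t\hat u^i_t+\bar A_t\hat{\bar x}_t+\bar B_t\hat{\bar u}_t+w^i_t$. Relative distances: $e^i_t=\hat x^i_t-\hat{\bar x}_t$, $\zeta^i_t=x^i_t-\bar x_t$. *)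

theory Defs
  imports "HOL-Analysis.Analysis"
begin

text \<open>Players are indexed by {1..n}, time by {1..T} (states also exist at time T+1).
  Vectors: real^'x (state), real^'u (action); matrices real^'c^'r (r rows, c columns).\<close>

text \<open>Weighted mean  sum_{i=1..n} a_i f_i  (used for x-bar, u-bar, w-bar, ...).\<close>
definition wavg :: "(nat \<Rightarrow> real) \<Rightarrow> nat \<Rightarrow> (nat \<Rightarrow> 'a::real_vector) \<Rightarrow> 'a" where
  "wavg a n f = (\<Sum>i=1..n. a i *\<^sub>R f i)"

text \<open>Asymptotically vanishing weights: alpha n i is the weight of player i in the n-player game.\<close>
definition asymp_vanishing :: "(nat \<Rightarrow> nat \<Rightarrow> real) \<Rightarrow> bool" where
  "asymp_vanishing \<alpha> \<longleftrightarrow>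
     (\<exists>n0 \<gamma>max. \<gamma>max > 0 \<and>
        (\<forall>n>n0. \<exists>\<gamma>::nat \<Rightarrow> real. \<forall>i\<in>{1..n}. \<alpha> n i = \<gamma> i / real n \<and> \<bar>\<gamma> i\<bar> \<le> \<gamma>max))"

text \<open>Trajectory (x,u) of the n-player mean-field system with initial states x1 and noises w,
  in which every player uses the linear law u^i_t = th_t x^i_t + (thb_t - th_t) r_t, where r is
  the reference signal (r = x-bar for the perfect-sharing feedback profile, r = z for the
  no-sharing profile).\<close>
definition generated_by ::
  "(nat \<Rightarrow> real^'x^'x) \<Rightarrow> (nat \<Rightarrow> real^'u^'x) \<Rightarrow> (nat \<Rightarrow> real^'x^'x) \<Rightarrow> (nat \<Rightarrow> real^'u^'x)
   \<Rightarrow> (nat \<Rightarrow> real) \<Rightarrow> nat \<Rightarrow> nat \<Rightarrow> (nat \<Rightarrow> real^'x) \<Rightarrow> (nat \<Rightarrow> nat \<Rightarrow> real^'x)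
   \<Rightarrow> (nat \<Rightarrow> real^'x^'u) \<Rightarrow> (nat \<Rightarrow> real^'x^'u) \<Rightarrow> (nat \<Rightarrow> real^'x)
   \<Rightarrow> (nat \<Rightarrow> nat \<Rightarrow> real^'x) \<Rightarrow> (nat \<Rightarrow> nat \<Rightarrow> real^'u) \<Rightarrow> bool" where
  "generated_by A B Ab Bb a n T x1 w th thb r x u \<longleftrightarrow>
     (\<forall>i\<in>{1..n}. x i 1 = x1 i) \<and>
     (\<forall>t\<in>{1..T}. \<forall>i\<in>{1..n}.
        u i t = th t *v x i t + (thb t - th t) *v r t \<and>
        x i (t + 1) = A t *v x i t + B t *v u i t + Ab t *v wavg a n (\<lambda>j. x j t)
                      + Bb t *v wavg a n (\<lambda>j. u j t) + w i t)"

definition prediction ::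
  "(nat \<Rightarrow> real^'x^'x) \<Rightarrow> (nat \<Rightarrow> real^'u^'x) \<Rightarrow> (nat \<Rightarrow> real^'x^'x) \<Rightarrow> (nat \<Rightarrow> real^'u^'x)
   \<Rightarrow> (nat \<Rightarrow> real^'x^'u) \<Rightarrow> nat \<Rightarrow> (nat \<Rightarrow> real^'x) \<Rightarrow> bool" where
  "prediction A B Ab Bb thb T z \<longleftrightarrow>
     (\<forall>t\<in>{1..T}. z (t + 1) = (A t + Ab t + (B t + Bb t) ** thb t) *v z t)"

end

theory Submission
  imports Defs
begin

text \<open>Because the weights sum to one, the mean-field terms and the common reference term r of
  a linear law u_i = \<theta> x_i + (\<theta>b - \<theta>) r act on every player exactly as on the weighted mean.
  They therefore cancel in the deviation x_i - xbar, which follows the reference-free recursion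
  x_i - xbar \<mapsto> (A + B \<theta>)(x_i - xbar) + (w_i - wbar) from the same initial value whatever r is.
  The mean follows xbar \<mapsto> (A + Ab + (B + Bb) \<theta>) xbar + (B + Bb)(\<theta>b - \<theta>) r + wbar;
  subtracting the prediction z gives the error recursion with gain \<theta> when r = z and with
  gain \<theta>b when r = xbar.\<close>

lemma wavg_cong: "(\<And>i. i \<in> {1..n} \<Longrightarrow> f i = g i) \<Longrightarrow> wavg a n f = wavg a n g"
  unfolding wavg_def by (rule sum.cong) auto

lemma wavg_add: "wavg a n (\<lambda>j. f j + g j) = wavg a n f + wavg a n g"
  unfolding wavg_def by (simp add: scaleR_right_distrib sum.distrib)

lemma wavg_const: "(\<Sum>i=1..n. a i) = 1 \<Longrightarrow> wavg a n (\<lambda>j. c) = c"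
  unfolding wavg_def by (simp add: scaleR_left.sum[symmetric])

lemma wavg_matrix_vector_mult: "wavg a n (\<lambda>j. (M::real^'x^'y) *v f j) = M *v wavg a n f"
  unfolding wavg_def
  by (simp add: linear_sum[OF matrix_vector_mul_linear] matrix_vector_mult_scaleR)

lemma matrix_vector_mult_gain_change:
  fixes N :: "real^'u^'x"
  shows "(M + N ** P) *v d + N *v ((Q - P) *v d) = (M + N ** Q) *v d"
proof -
  have "N ** P + N ** (Q - P) = N ** Q"
    by (simp flip: matrix_add_ldistrib)
  then show ?thesis
    by (metis add.assoc matrix_vector_mul_assoc matrix_vector_mult_add_rdistrib)
qed

context
  fixes A Ab :: "nat \<Rightarrow> real^'x^'x" and B Bb :: "nat \<Rightarrow> real^'u^'x"
    and \<theta> \<theta>b :: "nat \<Rightarrow> real^'x^'u" and a :: "nat \<Rightarrow> real" and n T :: nat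
    and x1 :: "nat \<Rightarrow> real^'x" and w :: "nat \<Rightarrow> nat \<Rightarrow> real^'x" and r :: "nat \<Rightarrow> real^'x"
    and x :: "nat \<Rightarrow> nat \<Rightarrow> real^'x" and u :: "nat \<Rightarrow> nat \<Rightarrow> real^'u"
  assumes gen: "generated_by A B Ab Bb a n T x1 w \<theta> \<theta>b r x u"
    and weights: "(\<Sum>i=1..n. a i) = 1"
begin

lemma generated_by_action:
  "t \<in> {1..T} \<Longrightarrow> i \<in> {1..n} \<Longrightarrow> u i t = \<theta> t *v x i t + (\<theta>b t - \<theta> t) *v r t"
  using gen unfolding generated_by_def by auto

lemma generated_by_state:
  "t \<in> {1..T} \<Longrightarrow> i \<in> {1..n} \<Longrightarrow>
     x i (t + 1) = A t *v x i t + B t *v u i t + Ab t *v wavg a n (\<lambda>j. x j t)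
                   + Bb t *v wavg a n (\<lambda>j. u j t) + w i t"
  using gen unfolding generated_by_def by auto

lemma generated_by_mean_action:
  assumes t: "t \<in> {1..T}"
  shows "wavg a n (\<lambda>j. u j t) = \<theta> t *v wavg a n (\<lambda>j. x j t) + (\<theta>b t - \<theta> t) *v r t"
proof -
  have "wavg a n (\<lambda>j. u j t) = wavg a n (\<lambda>j. \<theta> t *v x j t + (\<theta>b t - \<theta> t) *v r t)"
    using generated_by_action[OF t] by (rule wavg_cong)
  then show ?thesis
    unfolding wavg_add wavg_matrix_vector_mult wavg_const[OF weights] .
qed

lemma generated_by_action_deviation:
  "t \<in> {1..T} \<Longrightarrow> i \<in> {1..n} \<Longrightarrow>
     u i t - wavg a n (\<lambda>j. u j t) = \<theta> t *v (x i t - wavg a n (\<lambda>j. x j t))"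
  using generated_by_action generated_by_mean_action
  by (simp add: matrix_vector_mult_diff_distrib)

lemma generated_by_mean_state:
  assumes t: "t \<in> {1..T}"
  shows "wavg a n (\<lambda>j. x j (t + 1)) = (A t + Ab t) *v wavg a n (\<lambda>j. x j t)
           + (B t + Bb t) *v wavg a n (\<lambda>j. u j t) + wavg a n (\<lambda>j. w j t)"
proof -
  have "wavg a n (\<lambda>j. x j (t + 1))
      = wavg a n (\<lambda>j. A t *v x j t + B t *v u j t + Ab t *v wavg a n (\<lambda>j. x j t)
                      + Bb t *v wavg a n (\<lambda>j. u j t) + w j t)"
    using generated_by_state[OF t] by (rule wavg_cong)
  then show ?thesis
    unfolding wavg_add wavg_matrix_vector_mult wavg_const[OF weights]
      matrix_vector_mult_add_rdistrib
    by simp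
qed

lemma generated_by_state_deviation:
  assumes t: "t \<in> {1..T}" and i: "i \<in> {1..n}"
  shows "x i (t + 1) - wavg a n (\<lambda>j. x j (t + 1))
           = (A t + B t ** \<theta> t) *v (x i t - wavg a n (\<lambda>j. x j t))
             + (w i t - wavg a n (\<lambda>j. w j t))"
proof -
  have "x i (t + 1) - wavg a n (\<lambda>j. x j (t + 1))
      = A t *v (x i t - wavg a n (\<lambda>j. x j t)) + B t *v (u i t - wavg a n (\<lambda>j. u j t))
        + (w i t - wavg a n (\<lambda>j. w j t))"
    unfolding generated_by_mean_state[OF t] generated_by_state[OF t i]
    by (simp add: algebra_simps)
  then show ?thesis
    unfolding generated_by_action_deviation[OF t i] matrix_vector_mul_assoc
      matrix_vector_mult_add_rdistrib .
qed

lemma generated_by_mean_error: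
  assumes t: "t \<in> {1..T}"
    and z: "z (t + 1) = (A t + Ab t + (B t + Bb t) ** \<theta>b t) *v z t"
  shows "wavg a n (\<lambda>j. x j (t + 1)) - z (t + 1)
           = (A t + Ab t + (B t + Bb t) ** \<theta> t) *v (wavg a n (\<lambda>j. x j t) - z t)
             + (B t + Bb t) *v ((\<theta>b t - \<theta> t) *v (r t - z t)) + wavg a n (\<lambda>j. w j t)"
  unfolding generated_by_mean_state[OF t] generated_by_mean_action[OF t] z
  by (simp add: matrix_vector_mul_assoc[symmetric] algebra_simps)

end

lemma generated_by_state_deviation_reference_independent:
  fixes A Ab :: "nat \<Rightarrow> real^'x^'x" and B Bb :: "nat \<Rightarrow> real^'u^'x"
    and \<theta> \<theta>b :: "nat \<Rightarrow> real^'x^'u"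
  assumes gen: "generated_by A B Ab Bb a n T x1 w \<theta> \<theta>b r x u"
    and gen': "generated_by A B Ab Bb a n T x1 w \<theta> \<theta>b r' x' u'"
    and weights: "(\<Sum>i=1..n. a i) = 1"
    and "1 \<le> t" "t \<le> T" and i: "i \<in> {1..n}"
  shows "x i t - wavg a n (\<lambda>j. x j t) = x' i t - wavg a n (\<lambda>j. x' j t)"
  using \<open>1 \<le> t\<close> \<open>t \<le> T\<close> i
proof (induction t arbitrary: i rule: nat_induct_at_least)
  case base
  have "x j 1 = x' j 1" if "j \<in> {1..n}" for j
    using gen gen' that unfolding generated_by_def by auto
  moreover then have "wavg a n (\<lambda>j. x j 1) = wavg a n (\<lambda>j. x' j 1)"
    by (rule wavg_cong)
  ultimately show ?case using base by simp
next
  case (Suc t)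
  then have t: "t \<in> {1..T}" by simp
  show ?case
    using generated_by_state_deviation[OF gen weights t Suc.prems(2)]
      generated_by_state_deviation[OF gen' weights t Suc.prems(2)]
      Suc.IH[OF _ Suc.prems(2)] Suc.prems(1)
    by simp
qed

lemma deviations_and_mean_errors:
  fixes A Ab :: "nat \<Rightarrow> real^'x^'x" and B Bb :: "nat \<Rightarrow> real^'u^'x"
    and \<theta> \<theta>b :: "nat \<Rightarrow> real^'x^'u"
  assumes gen: "generated_by A B Ab Bb a n T x1 w \<theta> \<theta>b (\<lambda>t. wavg a n (\<lambda>j. x j t)) x u"
    and gen_hat: "generated_by A B Ab Bb a n T x1 w \<theta> \<theta>b z xh uh"
    and z: "prediction A B Ab Bb \<theta>b T z"
    and weights: "(\<Sum>i=1..n. a i) = 1"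
    and i: "i \<in> {1..n}" and t: "t \<in> {1..T}"
  shows "x i t - wavg a n (\<lambda>j. x j t) = xh i t - wavg a n (\<lambda>j. xh j t)"
    and "u i t - wavg a n (\<lambda>j. u j t) = uh i t - wavg a n (\<lambda>j. uh j t)"
    and "xh i (t + 1) - wavg a n (\<lambda>j. xh j (t + 1))
           = (A t + B t ** \<theta> t) *v (xh i t - wavg a n (\<lambda>j. xh j t))
             + (w i t - wavg a n (\<lambda>j. w j t))"
    and "wavg a n (\<lambda>j. xh j (t + 1)) - z (t + 1)
           = (A t + Ab t + (B t + Bb t) ** \<theta> t) *v (wavg a n (\<lambda>j. xh j t) - z t)
             + wavg a n (\<lambda>j. w j t)"
    and "wavg a n (\<lambda>j. x j (t + 1)) - z (t + 1)
           = (A t + Ab t + (B t + Bb t) ** \<theta>b t) *v (wavg a n (\<lambda>j. x j t) - z t)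
             + wavg a n (\<lambda>j. w j t)"
proof -
  have z_step: "z (t + 1) = (A t + Ab t + (B t + Bb t) ** \<theta>b t) *v z t"
    using z t unfolding prediction_def by auto
  show dev: "x i t - wavg a n (\<lambda>j. x j t) = xh i t - wavg a n (\<lambda>j. xh j t)"
    using generated_by_state_deviation_reference_independent[OF gen gen_hat weights] i t by simp
  show "u i t - wavg a n (\<lambda>j. u j t) = uh i t - wavg a n (\<lambda>j. uh j t)"
    using generated_by_action_deviation[OF gen weights t i]
      generated_by_action_deviation[OF gen_hat weights t i] dev
    by simp
  show "xh i (t + 1) - wavg a n (\<lambda>j. xh j (t + 1))
          = (A t + B t ** \<theta> t) *v (xh i t - wavg a n (\<lambda>j. xh j t))
            + (w i t - wavg a n (\<lambda>j. w j t))"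
    by (rule generated_by_state_deviation[OF gen_hat weights t i])
  show "wavg a n (\<lambda>j. xh j (t + 1)) - z (t + 1)
          = (A t + Ab t + (B t + Bb t) ** \<theta> t) *v (wavg a n (\<lambda>j. xh j t) - z t)
            + wavg a n (\<lambda>j. w j t)"
    using generated_by_mean_error[OF gen_hat weights t z_step] by simp
  show "wavg a n (\<lambda>j. x j (t + 1)) - z (t + 1)
          = (A t + Ab t + (B t + Bb t) ** \<theta>b t) *v (wavg a n (\<lambda>j. x j t) - z t)
            + wavg a n (\<lambda>j. w j t)"
    using generated_by_mean_error[OF gen weights t z_step]
    by (simp add: matrix_vector_mult_gain_change)
qed

theorem lemma3:
  fixes T n n0 :: nat and \<alpha> :: "nat \<Rightarrow> nat \<Rightarrow> real"
    and A Ab :: "nat \<Rightarrow> real^'x^'x" and B Bb :: "nat \<Rightarrow> real^'u^'x"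
    and \<theta> \<theta>b :: "nat \<Rightarrow> nat \<Rightarrow> real^'x^'u" and \<theta>inf \<theta>binf :: "nat \<Rightarrow> real^'x^'u"
    and x1 :: "nat \<Rightarrow> real^'x" and w :: "nat \<Rightarrow> nat \<Rightarrow> real^'x"
    and x xh y yh :: "nat \<Rightarrow> nat \<Rightarrow> real^'x" and u uh v vh :: "nat \<Rightarrow> nat \<Rightarrow> real^'u"
    and z zinf :: "nat \<Rightarrow> real^'x"
  assumes T: "T \<ge> 1" and n2: "n \<ge> 2"
    and wsum: "\<forall>m\<ge>2. (\<Sum>i=1..m. \<alpha> m i) = 1"
    and av: "asymp_vanishing \<alpha>"
    and nn0: "n \<ge> n0"
    and bnd: "\<exists>C. \<forall>m\<ge>n0. \<forall>t\<in>{1..T}. norm (\<theta> m t) \<le> C \<and> norm (\<theta>b m t) \<le> C"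
    and conv: "\<forall>t\<in>{1..T}. (\<lambda>m. \<theta> m t) \<longlonglongrightarrow> \<theta>inf t \<and> (\<lambda>m. \<theta>b m t) \<longlonglongrightarrow> \<theta>binf t"
    \<comment> \<open>z = z^n, zinf = z^infinity (predictions)\<close>
    and zn: "prediction A B Ab Bb (\<theta>b n) T z"
    and zi: "prediction A B Ab Bb \<theta>binf T zinf"
    \<comment> \<open>(x,u): equilibrium g*_n (of the stated form);  (xh,uh): no-sharing profile g-hat_n\<close>
    and eq: "generated_by A B Ab Bb (\<alpha> n) n T x1 w (\<theta> n) (\<theta>b n) (\<lambda>t. wavg (\<alpha> n) n (\<lambda>j. x j t)) x u"
    and ns: "generated_by A B Ab Bb (\<alpha> n) n T x1 w (\<theta> n) (\<theta>b n) z xh uh"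
    \<comment> \<open>(y,v): law with theta^infinity and x-bar; (yh,vh): no-sharing profile g-hat_infinity\<close>
    and eqi: "generated_by A B Ab Bb (\<alpha> n) n T x1 w \<theta>inf \<theta>binf (\<lambda>t. wavg (\<alpha> n) n (\<lambda>j. y j t)) y v"
    and nsi: "generated_by A B Ab Bb (\<alpha> n) n T x1 w \<theta>inf \<theta>binf zinf yh vh"
  shows
    "(\<forall>i\<in>{1..n}. \<forall>t\<in>{1..T}.
        x i t - wavg (\<alpha> n) n (\<lambda>j. x j t) = xh i t - wavg (\<alpha> n) n (\<lambda>j. xh j t) \<and>
        u i t - wavg (\<alpha> n) n (\<lambda>j. u j t) = uh i t - wavg (\<alpha> n) n (\<lambda>j. uh j t) \<and>
        (xh i (t+1) - wavg (\<alpha> n) n (\<lambda>j. xh j (t+1))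
           = (A t + B t ** \<theta> n t) *v (xh i t - wavg (\<alpha> n) n (\<lambda>j. xh j t))
             + (w i t - wavg (\<alpha> n) n (\<lambda>j. w j t))) \<and>
        (wavg (\<alpha> n) n (\<lambda>j. xh j (t+1)) - z (t+1)
           = (A t + Ab t + (B t + Bb t) ** \<theta> n t) *v (wavg (\<alpha> n) n (\<lambda>j. xh j t) - z t)
             + wavg (\<alpha> n) n (\<lambda>j. w j t)) \<and>
        (wavg (\<alpha> n) n (\<lambda>j. x j (t+1)) - z (t+1)
           = (A t + Ab t + (B t + Bb t) ** \<theta>b n t) *v (wavg (\<alpha> n) n (\<lambda>j. x j t) - z t)
             + wavg (\<alpha> n) n (\<lambda>j. w j t)))
     \<and>
     (\<forall>i\<in>{1..n}. \<forall>t\<in>{1..T}.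
        y i t - wavg (\<alpha> n) n (\<lambda>j. y j t) = yh i t - wavg (\<alpha> n) n (\<lambda>j. yh j t) \<and>
        v i t - wavg (\<alpha> n) n (\<lambda>j. v j t) = vh i t - wavg (\<alpha> n) n (\<lambda>j. vh j t) \<and>
        (yh i (t+1) - wavg (\<alpha> n) n (\<lambda>j. yh j (t+1))
           = (A t + B t ** \<theta>inf t) *v (yh i t - wavg (\<alpha> n) n (\<lambda>j. yh j t))
             + (w i t - wavg (\<alpha> n) n (\<lambda>j. w j t))) \<and>
        (wavg (\<alpha> n) n (\<lambda>j. yh j (t+1)) - zinf (t+1)
           = (A t + Ab t + (B t + Bb t) ** \<theta>inf t) *v (wavg (\<alpha> n) n (\<lambda>j. yh j t) - zinf t)
             + wavg (\<alpha> n) n (\<lambda>j. w j t)) \<and>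
        (wavg (\<alpha> n) n (\<lambda>j. y j (t+1)) - zinf (t+1)
           = (A t + Ab t + (B t + Bb t) ** \<theta>binf t) *v (wavg (\<alpha> n) n (\<lambda>j. y j t) - zinf t)
             + wavg (\<alpha> n) n (\<lambda>j. w j t)))"
proof -
  have weights: "(\<Sum>i=1..n. \<alpha> n i) = 1" using wsum n2 by auto
  show ?thesis
    using deviations_and_mean_errors[OF eq ns zn weights]
      deviations_and_mean_errors[OF eqi nsi zi weights]
    by blast
qed

end
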